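(* Fix $\sigma>0$ and $\alpha\in[\tfrac12,1]$. For $\mathsf{A}>0$ let $\mathsf{C}(\mathsf{A},\alpha\mathsf{A})=\sup I(X;Y)$, where $Y=X+Z$ with $Z\sim\mathcal{N}(0,\sigma^2)$ independent of $X$, and the supremum is over all distributions of $X$ with $X\ge0$ a.s., $\Pr[X>\mathsf{A}]=0$ and $\mathbb{E}[X]\le\alpha\mathsf{A}$. Then $$\lim_{\mathsf{A}\uparrow\infty}\left\{\mathsf{C}(\mathsf{A},\alpha\mathsf{A})-\log\frac{\mathsf{A}}{\sigma}\right\}=-\frac12\log(2\pi e)\qquad\text{and}\qquad\lim_{\mathsf{A}\downarrow0}\frac{\mathsf{C}(\mathsf{A},\alpha\mathsf{A})}{\mathsf{A}^2/\sigma^2}=\frac18.$$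
   Context: Logarithms are natural (capacity in nats). The channel is the free-space optical intensity channel with nonnegative input, peak-power constraint $\mathsf{A}$, average-power constraint $\alpha\mathsf{A}$, and additive Gaussian noise of variance $\sigma^2$. *)

theory Defs
  imports "HOL-Probability.Probability"
begin

definition gauss_noise :: "real \<Rightarrow> real measure" where
  "gauss_noise \<sigma> = density lborel (\<lambda>z. ennreal (normal_density 0 \<sigma> z))"

definition input_noise_space :: "real measure \<Rightarrow> real \<Rightarrow> (real \<times> real) measure" where
  "input_noise_space \<mu> \<sigma> = \<mu> \<Otimes>\<^sub>M gauss_noise \<sigma>"

definition channel_MI :: "real measure \<Rightarrow> real \<Rightarrow> real" where
  "channel_MI \<mu> \<sigma> =
     prob_space.mutual_information (input_noise_space \<mu> \<sigma>) (exp 1) borel borel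
       fst (\<lambda>(x, z). x + z)"

definition admissible_input :: "real \<Rightarrow> real \<Rightarrow> real measure \<Rightarrow> bool" where
  "admissible_input A \<alpha> \<mu> \<longleftrightarrow>
     sets \<mu> = sets borel \<and> prob_space \<mu> \<and>
     (AE x in \<mu>. 0 \<le> x) \<and> emeasure \<mu> {x. x > A} = 0 \<and>
     (\<integral>x. x \<partial>\<mu>) \<le> \<alpha> * A"

definition capacity :: "real \<Rightarrow> real \<Rightarrow> real \<Rightarrow> real" where
  "capacity \<sigma> \<alpha> A = Sup {channel_MI \<mu> \<sigma> | \<mu>. admissible_input A \<alpha> \<mu>}"

end

theory Submission
  imports Defs "HOL-Real_Asymp.Real_Asymp"
begin

text \<open>
  Write I(X;Y) = h(Y) - h(Z) with h(Z) = ln(2 pi e sigma^2)/2. By Gibbs' inequality every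
  probability density q gives I(X;Y) \<le> -E[ln q(Y)] - h(Z). The Gaussian q with mean A/2 and
  variance sigma^2 + A^2/4 yields C \<le> ln(1 + A^2/(4 sigma^2))/2, sharp for small A; the mixture
  of the uniform density on [-sqrt A, A + sqrt A] (weight 1 - 1/A) with a wide Gaussian (weight
  1/A) yields C \<le> ln A - h(Z) + o(1) for large A. The lower bounds come from two inputs of mean
  A/2, which is where alpha \<ge> 1/2 is needed. The uniform input on
  [0, A] has output density at most 1/A, so h(Y) \<ge> ln A. For the equiprobable input on {0, A},
  I(X;Y) is the noise expectation of -ln((1 + L)/2) with L a Gaussian likelihood ratio;
  expanding the logarithm to third order and using E[L^k] = exp(k(k-1) A^2/(2 sigma^2)) gives
  I(X;Y) \<ge> A^2/(8 sigma^2) - O(A^4).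
\<close>

section \<open>The Gaussian density\<close>

abbreviation noise_density :: "real \<Rightarrow> real \<Rightarrow> real" where
  "noise_density \<sigma> \<equiv> normal_density 0 \<sigma>"

lemma ln_normal_density:
  assumes "\<sigma> > 0"
  shows "ln (normal_density m \<sigma> y) = - ln (2*pi*\<sigma>\<^sup>2)/2 - (y - m)\<^sup>2/(2*\<sigma>\<^sup>2)"
proof -
  have pos: "2*pi*\<sigma>\<^sup>2 > 0" using assms by simp
  have "ln (normal_density m \<sigma> y) = ln (1 / sqrt (2*pi*\<sigma>\<^sup>2)) + ln (exp (-(y - m)\<^sup>2/(2*\<sigma>\<^sup>2)))"
    unfolding normal_density_def using pos by (subst ln_mult) auto
  also have "ln (1 / sqrt (2*pi*\<sigma>\<^sup>2)) = - ln (2*pi*\<sigma>\<^sup>2)/2"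
    using pos by (simp add: ln_div ln_sqrt)
  finally show ?thesis by simp
qed

lemma noise_density_abs_antimono:
  assumes "\<bar>w\<bar> \<le> \<bar>z\<bar>"
  shows "noise_density \<sigma> z \<le> noise_density \<sigma> w"
proof -
  have "w\<^sup>2 \<le> z\<^sup>2" using assms by (metis abs_le_square_iff)
  then have "-(z - 0)\<^sup>2/(2*\<sigma>\<^sup>2) \<le> -(w - 0)\<^sup>2/(2*\<sigma>\<^sup>2)"
    by (simp add: divide_right_mono)
  then show ?thesis unfolding normal_density_def
    by (intro mult_left_mono) auto
qed

lemma noise_density_le_peak: "noise_density \<sigma> z \<le> noise_density \<sigma> 0"
  by (rule noise_density_abs_antimono) simp

lemma noise_density_diff: "noise_density \<sigma> (y - x) = normal_density y \<sigma> x"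
  unfolding normal_density_def by (simp add: power2_commute)

lemma noise_density_shift:
  assumes "\<sigma> > 0"
  shows "noise_density \<sigma> (z - c*\<sigma>\<^sup>2) = noise_density \<sigma> z * exp (c*z - c\<^sup>2*\<sigma>\<^sup>2/2)"
proof -
  have "- (z - c*\<sigma>\<^sup>2 - 0)\<^sup>2/(2*\<sigma>\<^sup>2) = - (z - 0)\<^sup>2/(2*\<sigma>\<^sup>2) + (c*z - c\<^sup>2*\<sigma>\<^sup>2/2)"
    using assms by (simp add: field_simps power2_eq_square)
  then have "exp (- (z - c*\<sigma>\<^sup>2 - 0)\<^sup>2/(2*\<sigma>\<^sup>2)) =
      exp (- (z - 0)\<^sup>2/(2*\<sigma>\<^sup>2)) * exp (c*z - c\<^sup>2*\<sigma>\<^sup>2/2)"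
    by (simp only: exp_add)
  then show ?thesis unfolding normal_density_def by simp
qed

lemma has_bochner_integral_noise_density_exp:
  assumes "\<sigma> > 0"
  shows "has_bochner_integral lborel (\<lambda>z. noise_density \<sigma> z * exp (c*z)) (exp (c\<^sup>2*\<sigma>\<^sup>2/2))"
proof -
  have complete_square:
    "noise_density \<sigma> z * exp (c*z) = exp (c\<^sup>2*\<sigma>\<^sup>2/2) * normal_density (c*\<sigma>\<^sup>2) \<sigma> z" for z
  proof -
    have "-(z - 0)\<^sup>2/(2*\<sigma>\<^sup>2) + c*z = c\<^sup>2*\<sigma>\<^sup>2/2 + (-(z - c*\<sigma>\<^sup>2)\<^sup>2/(2*\<sigma>\<^sup>2))"
      using assms by (simp add: field_simps power2_eq_square)
    then show ?thesis unfolding normal_density_def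
      by (simp add: exp_add[symmetric] mult_ac)
  qed
  have "has_bochner_integral lborel (\<lambda>z. exp (c\<^sup>2*\<sigma>\<^sup>2/2) * normal_density (c*\<sigma>\<^sup>2) \<sigma> z)
      (exp (c\<^sup>2*\<sigma>\<^sup>2/2) * 1)"
    by (intro has_bochner_integral_mult_right) (auto simp: has_bochner_integral_iff assms)
  then show ?thesis unfolding complete_square by simp
qed

text \<open>
  exp (c z - c^2 sigma^2 / 2) is the likelihood ratio of the noise shifted by c sigma^2 against
  the noise, so its k-th moment is a Gaussian moment generating function.
\<close>

lemma has_bochner_integral_likelihood_ratio_power:
  assumes "\<sigma> > 0"
  shows "has_bochner_integral lborel (\<lambda>z. noise_density \<sigma> z * exp (c*z - c\<^sup>2*\<sigma>\<^sup>2/2) ^ k)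
           (exp (real k * (real k - 1) * c\<^sup>2*\<sigma>\<^sup>2/2))"
proof -
  have power_eq: "noise_density \<sigma> z * exp (c*z - c\<^sup>2*\<sigma>\<^sup>2/2) ^ k =
      exp (- real k * c\<^sup>2*\<sigma>\<^sup>2/2) * (noise_density \<sigma> z * exp ((real k * c) * z))" for z
  proof -
    have "exp (c*z - c\<^sup>2*\<sigma>\<^sup>2/2) ^ k = exp (real k * (c*z - c\<^sup>2*\<sigma>\<^sup>2/2))"
      by (rule exp_of_nat_mult[symmetric])
    also have "\<dots> = exp (- real k * c\<^sup>2*\<sigma>\<^sup>2/2) * exp ((real k * c) * z)"
      by (simp add: exp_add[symmetric] algebra_simps)
    finally show ?thesis by simp
  qed
  have "has_bochner_integral lborel
      (\<lambda>z. exp (- real k * c\<^sup>2*\<sigma>\<^sup>2/2) * (noise_density \<sigma> z * exp ((real k * c) * z)))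
      (exp (- real k * c\<^sup>2*\<sigma>\<^sup>2/2) * exp ((real k * c)\<^sup>2*\<sigma>\<^sup>2/2))"
    by (intro has_bochner_integral_mult_right has_bochner_integral_noise_density_exp assms)
  moreover have "exp (- real k * c\<^sup>2*\<sigma>\<^sup>2/2) * exp ((real k * c)\<^sup>2*\<sigma>\<^sup>2/2) =
      exp (real k * (real k - 1) * c\<^sup>2*\<sigma>\<^sup>2/2)"
    by (simp add: exp_add[symmetric] power2_eq_square algebra_simps)
  ultimately show ?thesis unfolding power_eq by simp
qed

lemma ln_add_one_le_cubic:
  assumes "u > (-1::real)"
  shows "ln (1 + u) \<le> u - u\<^sup>2/2 + u^3/3"
proof -
  define g where "g t = ln (1 + t) - t + t\<^sup>2/2 - t^3/3" for t :: real
  have deriv: "DERIV g t :> - (t^3) / (1 + t)" if "t > -1" for t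
  proof -
    have "DERIV g t :> 1/(1 + t) - 1 + t - t\<^sup>2"
      unfolding g_def using that
      by (auto intro!: derivative_eq_intros simp: power2_eq_square field_simps)
    moreover have "1/(1 + t) - 1 + t - t\<^sup>2 = - (t^3) / (1 + t)"
      using that by (simp add: field_simps power2_eq_square power3_eq_cube)
    ultimately show ?thesis by simp
  qed
  have "g u \<le> g 0"
  proof (cases "u \<ge> 0")
    case True
    show ?thesis
    proof (rule DERIV_nonpos_imp_nonincreasing[of 0 u g, OF True])
      fix t assume "0 \<le> t" "t \<le> u"
      then show "\<exists>y. DERIV g t :> y \<and> y \<le> 0"
        using deriv[of t] by (intro exI[of _ "- (t^3) / (1 + t)"]) auto
    qed
  next
    case False
    show ?thesis
    proof (rule DERIV_nonneg_imp_nondecreasing[of u 0 g])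
      show "u \<le> 0" using False by simp
      fix t assume t: "u \<le> t" "t \<le> 0"
      then have "t > -1" using assms by simp
      moreover have "0 \<le> - (t^3)"
        using t(2) by (simp add: power3_eq_cube mult_nonneg_nonpos)
      ultimately have "- (t^3) / (1 + t) \<ge> 0" by (intro divide_nonneg_pos) auto
      then show "\<exists>y. DERIV g t :> y \<and> y \<ge> 0"
        using deriv[of t] \<open>t > -1\<close> by blast
    qed
  qed
  then show ?thesis unfolding g_def by simp
qed

lemma neg_ln_half_one_plus_ge_cubic:
  fixes e :: real
  assumes "0 < e"
  shows "2/3 - 7/8 * e + 1/4 * e\<^sup>2 - 1/24 * e^3 \<le> - ln ((1 + e)/2)"
proof -
  define u where "u = (e - 1)/2"
  have "ln ((1 + e)/2) = ln (1 + u)" unfolding u_def by (simp add: field_simps)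
  also have "\<dots> \<le> u - u\<^sup>2/2 + u^3/3"
    using assms unfolding u_def by (intro ln_add_one_le_cubic) simp
  also have "\<dots> = - (2/3 - 7/8 * e + 1/4 * e\<^sup>2 - 1/24 * e^3)"
    unfolding u_def by (simp add: field_simps power2_eq_square power3_eq_cube)
  finally show ?thesis by simp
qed

lemma square_add_le: "(a + b)\<^sup>2 \<le> 2*a\<^sup>2 + 2*(b::real)\<^sup>2"
proof -
  have "0 \<le> (a - b)\<^sup>2" by simp
  then show ?thesis by (simp add: power2_eq_square algebra_simps)
qed

lemma abs_ln_half_one_plus_le:
  fixes e :: real
  assumes "0 < e"
  shows "\<bar>ln ((1 + e)/2)\<bar> \<le> ln 2 + e"
proof -
  have "ln (1/2) \<le> ln ((1 + e)/2)" using assms by (subst ln_le_cancel_iff) auto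
  then have "- ln 2 \<le> ln ((1 + e)/2)" by (simp add: ln_div)
  moreover have "ln ((1 + e)/2) \<le> (1 + e)/2 - 1"
    using assms by (intro ln_le_minus_one) simp
  ultimately show ?thesis using assms ln_ge_zero[of "2::real"] by (simp add: abs_le_iff)
qed

section \<open>A mixture density for large amplitudes\<close>

definition mixture_density :: "real \<Rightarrow> real \<Rightarrow> real \<Rightarrow> real \<Rightarrow> real" where
  "mixture_density A s \<eta> y =
     (1 - \<eta>) / (A + 2 * s) * indicator {- s..A + s} y + \<eta> * normal_density (A/2) A y"

context
  fixes A s \<eta> :: real
  assumes A_ge: "1 \<le> A" and s_pos: "0 < s" and \<eta>_pos: "0 < \<eta>" and \<eta>_less: "\<eta> < 1"
begin

lemma mixture_density_pos: "0 < mixture_density A s \<eta> y"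
  unfolding mixture_density_def using A_ge s_pos \<eta>_pos \<eta>_less normal_density_pos[of A "A/2" y]
  by (intro add_nonneg_pos) auto

lemma mixture_density_le_one: "mixture_density A s \<eta> y \<le> 1"
proof -
  have "1 \<le> 2*pi*A\<^sup>2"
    using A_ge pi_gt3 mult_mono[of 1 "2*pi" 1 "A\<^sup>2"] by (simp add: one_le_power)
  then have "1 / sqrt (2*pi*A\<^sup>2) \<le> 1" by simp
  moreover have "normal_density (A/2) A y \<le> 1 / sqrt (2*pi*A\<^sup>2)"
    unfolding normal_density_def by (intro mult_left_le) auto
  ultimately have "normal_density (A/2) A y \<le> 1" by linarith
  moreover have "(1 - \<eta>) / (A + 2 * s) \<le> (1 - \<eta>) / 1"
    using A_ge s_pos \<eta>_less by (intro divide_left_mono) auto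
  ultimately have "mixture_density A s \<eta> y \<le> (1 - \<eta>) * 1 + \<eta> * 1"
    unfolding mixture_density_def using \<eta>_pos \<eta>_less
    by (intro add_mono mult_left_mono) (auto simp: indicator_def)
  then show ?thesis by simp
qed

lemma has_bochner_integral_mixture_density: "has_bochner_integral lborel (mixture_density A s \<eta>) 1"
proof -
  have "has_bochner_integral lborel (\<lambda>y. indicator {- s..A + s} y) (A + 2 * s)"
    using A_ge s_pos by (simp add: has_bochner_integral_iff integrable_indicator_iff emeasure_lborel_Icc_eq)
  moreover have "has_bochner_integral lborel (normal_density (A/2) A) 1"
    using A_ge by (simp add: has_bochner_integral_iff)
  ultimately have "has_bochner_integral lborel (mixture_density A s \<eta>)
      ((1 - \<eta>) / (A + 2 * s) * (A + 2 * s) + \<eta> * 1)"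
    unfolding mixture_density_def[abs_def]
    by (intro has_bochner_integral_add has_bochner_integral_mult_right)
  then show ?thesis using A_ge s_pos by simp
qed

lemma neg_ln_mixture_density_le_gauss_part:
  assumes "0 \<le> x" "x \<le> A"
  shows "- ln (mixture_density A s \<eta> (x + z)) \<le> - ln \<eta> + ln (2*pi*A\<^sup>2)/2 + 1/4 + z\<^sup>2"
proof -
  have A_pos: "0 < A" using A_ge by simp
  have "\<eta> * normal_density (A/2) A (x + z) \<le> mixture_density A s \<eta> (x + z)"
    unfolding mixture_density_def using s_pos \<eta>_less A_pos by (auto simp: indicator_def)
  then have "ln (\<eta> * normal_density (A/2) A (x + z)) \<le> ln (mixture_density A s \<eta> (x + z))"
    using \<eta>_pos normal_density_pos[OF A_pos] mixture_density_pos by (subst ln_le_cancel_iff) auto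
  moreover have "ln (\<eta> * normal_density (A/2) A (x + z)) =
      ln \<eta> + (- ln (2*pi*A\<^sup>2)/2 - (x + z - A/2)\<^sup>2/(2*A\<^sup>2))"
    using \<eta>_pos normal_density_pos[OF A_pos, of "A/2" "x + z"]
    by (simp only: ln_mult_pos ln_normal_density[OF A_pos])
  moreover have "(x + z - A/2)\<^sup>2/(2*A\<^sup>2) \<le> 1/4 + z\<^sup>2"
  proof -
    have "\<bar>x - A/2\<bar> \<le> A/2" using assms unfolding abs_le_iff by auto
    then have "(x - A/2)\<^sup>2 \<le> (A/2)\<^sup>2" by (metis abs_le_square_iff abs_of_pos A_pos half_gt_zero)
    then have "((x - A/2) + z)\<^sup>2 \<le> A\<^sup>2/2 + 2*z\<^sup>2"
      using square_add_le[of "x - A/2" z] by (simp add: power2_eq_square)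
    then have "(x + z - A/2)\<^sup>2/(2*A\<^sup>2) \<le> (A\<^sup>2/2 + 2*z\<^sup>2)/(2*A\<^sup>2)"
      using A_pos by (intro divide_right_mono) (auto simp: algebra_simps)
    also have "\<dots> = 1/4 + z\<^sup>2/A\<^sup>2" using A_pos by (simp add: field_simps power2_eq_square)
    also have "z\<^sup>2/A\<^sup>2 \<le> z\<^sup>2"
      using A_ge by (simp add: divide_le_eq mult_le_cancel_left1 one_le_power)
    finally show ?thesis by simp
  qed
  ultimately show ?thesis by linarith
qed

lemma neg_ln_mixture_density_le_uniform_part:
  assumes "0 \<le> x" "x \<le> A" "\<bar>z\<bar> \<le> s"
  shows "- ln (mixture_density A s \<eta> (x + z)) \<le> ln ((A + 2 * s)/(1 - \<eta>))"
proof -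
  have "(1 - \<eta>) / (A + 2 * s) \<le> mixture_density A s \<eta> (x + z)"
    unfolding mixture_density_def using assms \<eta>_pos
    by (auto simp: indicator_def abs_le_iff intro!: add_nonneg_nonneg)
  then have "ln ((1 - \<eta>) / (A + 2 * s)) \<le> ln (mixture_density A s \<eta> (x + z))"
    using A_ge s_pos \<eta>_less mixture_density_pos by (subst ln_le_cancel_iff) auto
  then show ?thesis using A_ge s_pos \<eta>_less by (simp add: ln_div)
qed

text \<open>Outside the window |z| \<le> s the factor z^2/s^2 \<ge> 1 absorbs the Gaussian part of the
  bound; its expectation under the noise is then a fourth moment.\<close>

lemma neg_ln_mixture_density_le:
  assumes "0 \<le> x" "x \<le> A"
  shows "- ln (mixture_density A s \<eta> (x + z)) \<le>
    ln ((A + 2 * s)/(1 - \<eta>)) + ((- ln \<eta> + ln (2*pi*A\<^sup>2)/2 + 1/4) * z\<^sup>2 + z^4)/s\<^sup>2"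
proof -
  define K where "K = - ln \<eta> + ln (2*pi*A\<^sup>2)/2 + 1/4"
  have "1 \<le> 2*pi*A\<^sup>2"
    using A_ge pi_gt3 mult_mono[of 1 "2*pi" 1 "A\<^sup>2"] by (simp add: one_le_power)
  then have "0 \<le> ln (2*pi*A\<^sup>2)" by (rule ln_ge_zero)
  moreover have "ln \<eta> \<le> 0" using \<eta>_pos \<eta>_less by simp
  ultimately have K_nonneg: "0 \<le> K" unfolding K_def by linarith
  have L_nonneg: "0 \<le> ln ((A + 2 * s)/(1 - \<eta>))" using A_ge s_pos \<eta>_pos \<eta>_less by simp
  show ?thesis
  proof (cases "\<bar>z\<bar> \<le> s")
    case True
    have "0 \<le> (K * z\<^sup>2 + z^4)/s\<^sup>2" using K_nonneg by simp
    then show ?thesis using neg_ln_mixture_density_le_uniform_part[OF assms True] unfolding K_def by linarith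
  next
    case False
    then have "s\<^sup>2 \<le> \<bar>z\<bar>\<^sup>2" using s_pos by (intro power_mono) auto
    then have "s\<^sup>2 \<le> z\<^sup>2" by simp
    then have "1 \<le> z\<^sup>2/s\<^sup>2" using s_pos by simp
    then have "K + z\<^sup>2 \<le> (K + z\<^sup>2) * (z\<^sup>2/s\<^sup>2)"
      using K_nonneg by (metis mult.right_neutral mult_left_mono add_nonneg_nonneg zero_le_power2)
    also have "\<dots> = (K * z\<^sup>2 + z^4)/s\<^sup>2" by (simp add: field_simps power2_eq_square power4_eq_xxxx)
    finally show ?thesis
      using neg_ln_mixture_density_le_gauss_part[OF assms, of z] L_nonneg unfolding K_def by linarith
  qed
qed

end

section \<open>The channel with a peak-limited input\<close>

definition output_density :: "real measure \<Rightarrow> real \<Rightarrow> real \<Rightarrow> real" where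
  "output_density \<mu> \<sigma> y = (\<integral>x. noise_density \<sigma> (y - x) \<partial>\<mu>)"

definition gauss_entropy :: "real \<Rightarrow> real" where
  "gauss_entropy \<sigma> = ln (2 * pi * exp 1 * \<sigma>\<^sup>2) / 2"

lemma gauss_entropy_eq:
  assumes "\<sigma> > 0"
  shows "gauss_entropy \<sigma> = ln (2*pi*\<sigma>\<^sup>2)/2 + 1/2"
  using assms by (simp add: gauss_entropy_def ln_mult field_simps)

lemma gauss_entropy_eq_ln_sigma:
  assumes "\<sigma> > 0"
  shows "gauss_entropy \<sigma> = (1/2) * ln (2 * pi * exp 1) + ln \<sigma>"
  using assms by (simp add: gauss_entropy_def ln_mult ln_realpow)

lemma prob_space_gauss_noise: "\<sigma> > 0 \<Longrightarrow> prob_space (gauss_noise \<sigma>)"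
  unfolding gauss_noise_def by (rule prob_space_normal_density)

lemma sets_gauss_noise [measurable_cong]: "sets (gauss_noise \<sigma>) = sets borel"
  unfolding gauss_noise_def by simp

locale peak_limited_input =
  fixes \<mu> :: "real measure" and \<sigma> A :: real
  assumes noise_pos: "\<sigma> > 0"
    and sets_input [measurable_cong]: "sets \<mu> = sets borel"
    and prob_space_input: "prob_space \<mu>"
    and AE_input_bounded: "AE x in \<mu>. 0 \<le> x \<and> x \<le> A"
begin

abbreviation "G \<equiv> gauss_noise \<sigma>"
abbreviation "M \<equiv> \<mu> \<Otimes>\<^sub>M G"

sublocale PM: pair_prob_space \<mu> G
  unfolding pair_prob_space_def pair_sigma_finite_def
  using prob_space_input prob_space_gauss_noise[OF noise_pos]
  by (auto intro: prob_space_imp_sigma_finite)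

sublocale PL: pair_sigma_finite \<mu> lborel
  unfolding pair_sigma_finite_def using prob_space_input
  by (auto intro: prob_space_imp_sigma_finite lborel.sigma_finite_measure_axioms)

lemma measurable_output_density [measurable]: "output_density \<mu> \<sigma> \<in> borel_measurable borel"
proof -
  have "(\<lambda>y. \<integral>x. noise_density \<sigma> (y - x) \<partial>\<mu>) \<in> borel_measurable borel"
    by (rule PM.M1.borel_measurable_lebesgue_integral) measurable
  then show ?thesis unfolding output_density_def[abs_def] .
qed

lemma integrable_noise_density_diff: "integrable \<mu> (\<lambda>x. noise_density \<sigma> (y - x))"
  by (rule PM.M1.integrable_const_bound[where B="noise_density \<sigma> 0"])
    (auto intro: noise_density_le_peak)

lemma output_density_le_peak: "output_density \<mu> \<sigma> y \<le> noise_density \<sigma> 0"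
proof -
  have "output_density \<mu> \<sigma> y \<le> (\<integral>x. noise_density \<sigma> 0 \<partial>\<mu>)"
    unfolding output_density_def
    by (intro integral_mono integrable_noise_density_diff) (auto intro: noise_density_le_peak)
  then show ?thesis by (simp add: PM.M1.prob_space)
qed

lemma output_density_ge: "noise_density \<sigma> (\<bar>y\<bar> + A) \<le> output_density \<mu> \<sigma> y"
proof -
  have "(\<integral>x. noise_density \<sigma> (\<bar>y\<bar> + A) \<partial>\<mu>) \<le> output_density \<mu> \<sigma> y"
    unfolding output_density_def
  proof (intro integral_mono_AE integrable_noise_density_diff)
    show "AE x in \<mu>. noise_density \<sigma> (\<bar>y\<bar> + A) \<le> noise_density \<sigma> (y - x)"
      using AE_input_bounded by eventually_elim (intro noise_density_abs_antimono, auto)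
  qed simp
  then show ?thesis by (simp add: PM.M1.prob_space)
qed

lemma output_density_pos: "output_density \<mu> \<sigma> y > 0"
  using output_density_ge[of y] normal_density_pos[OF noise_pos, of 0 "\<bar>y\<bar> + A"] by linarith

lemma nn_integral_input_output:
  fixes F :: "real \<times> real \<Rightarrow> ennreal"
  assumes [measurable]: "F \<in> borel_measurable (borel \<Otimes>\<^sub>M borel)"
  shows "(\<integral>\<^sup>+w. F (fst w, fst w + snd w) \<partial>M) =
         (\<integral>\<^sup>+w. ennreal (noise_density \<sigma> (snd w - fst w)) * F w \<partial>(\<mu> \<Otimes>\<^sub>M lborel))"
proof -
  have "(\<integral>\<^sup>+w. F (fst w, fst w + snd w) \<partial>M) = (\<integral>\<^sup>+x. \<integral>\<^sup>+z. F (x, x + z) \<partial>G \<partial>\<mu>)"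
    by (subst PM.M2.nn_integral_fst[symmetric]) (auto simp: split_beta')
  also have "\<dots> = (\<integral>\<^sup>+x. \<integral>\<^sup>+z. ennreal (noise_density \<sigma> z) * F (x, x + z) \<partial>lborel \<partial>\<mu>)"
    unfolding gauss_noise_def by (subst nn_integral_density) auto
  also have "\<dots> = (\<integral>\<^sup>+x. \<integral>\<^sup>+y. ennreal (noise_density \<sigma> (y - x)) * F (x, y) \<partial>lborel \<partial>\<mu>)"
  proof (rule nn_integral_cong)
    fix x
    show "(\<integral>\<^sup>+z. ennreal (noise_density \<sigma> z) * F (x, x + z) \<partial>lborel) =
        (\<integral>\<^sup>+y. ennreal (noise_density \<sigma> (y - x)) * F (x, y) \<partial>lborel)"
      using nn_integral_real_affine[where c=1 and t=x
          and f="\<lambda>y. ennreal (noise_density \<sigma> (y - x)) * F (x, y)"]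
      by simp
  qed
  also have "\<dots> = (\<integral>\<^sup>+w. ennreal (noise_density \<sigma> (snd w - fst w)) * F w \<partial>(\<mu> \<Otimes>\<^sub>M lborel))"
    by (subst lborel.nn_integral_fst[symmetric]) (auto simp: split_beta')
  finally show ?thesis .
qed

lemma distr_output: "distr M lborel (\<lambda>(x, z). x + z) = density lborel (output_density \<mu> \<sigma>)"
proof (rule measure_eqI)
  fix B assume "B \<in> sets (distr M lborel (\<lambda>(x, z). x + z))"
  then have B [measurable]: "B \<in> sets borel" by simp
  have "emeasure (distr M lborel (\<lambda>(x, z). x + z)) B =
      (\<integral>\<^sup>+y. indicator B y \<partial>distr M lborel (\<lambda>(x, z). x + z))"
    by (simp add: nn_integral_indicator)
  also have "\<dots> = (\<integral>\<^sup>+w. indicator B (fst w + snd w) \<partial>M)"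
    by (subst nn_integral_distr) (auto simp: split_beta')
  also have "\<dots> = (\<integral>\<^sup>+w. ennreal (noise_density \<sigma> (snd w - fst w)) * indicator B (snd w) \<partial>(\<mu> \<Otimes>\<^sub>M lborel))"
    using nn_integral_input_output[of "\<lambda>w. indicator B (snd w)"] by simp
  also have "\<dots> = (\<integral>\<^sup>+y. \<integral>\<^sup>+x. ennreal (noise_density \<sigma> (y - x)) * indicator B y \<partial>\<mu> \<partial>lborel)"
    by (subst PL.nn_integral_snd[symmetric]) (auto simp: split_beta')
  also have "\<dots> = (\<integral>\<^sup>+y. ennreal (output_density \<mu> \<sigma> y) * indicator B y \<partial>lborel)"
  proof (rule nn_integral_cong)
    fix y :: real
    have "(\<integral>\<^sup>+x. ennreal (noise_density \<sigma> (y - x)) \<partial>\<mu>) = ennreal (output_density \<mu> \<sigma> y)"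
      unfolding output_density_def
      by (rule nn_integral_eq_integral[OF integrable_noise_density_diff]) simp
    then show "(\<integral>\<^sup>+x. ennreal (noise_density \<sigma> (y - x)) * indicator B y \<partial>\<mu>) =
        ennreal (output_density \<mu> \<sigma> y) * indicator B y"
      by (subst nn_integral_multc) auto
  qed
  also have "\<dots> = emeasure (density lborel (output_density \<mu> \<sigma>)) B"
    by (subst emeasure_density) auto
  finally show "emeasure (distr M lborel (\<lambda>(x, z). x + z)) B =
      emeasure (density lborel (output_density \<mu> \<sigma>)) B" .
qed simp

lemma distr_input_output:
  "distr M (\<mu> \<Otimes>\<^sub>M lborel) (\<lambda>w. (fst w, fst w + snd w)) =
   density (\<mu> \<Otimes>\<^sub>M lborel) (\<lambda>w. ennreal (noise_density \<sigma> (snd w - fst w)))"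
proof (rule measure_eqI)
  fix C assume "C \<in> sets (distr M (\<mu> \<Otimes>\<^sub>M lborel) (\<lambda>w. (fst w, fst w + snd w)))"
  then have "C \<in> sets (\<mu> \<Otimes>\<^sub>M lborel)" by simp
  also have "sets (\<mu> \<Otimes>\<^sub>M lborel) = sets (borel \<Otimes>\<^sub>M borel)"
    by (rule sets_pair_measure_cong) (auto simp: sets_input)
  finally have C [measurable]: "C \<in> sets (borel \<Otimes>\<^sub>M borel)" .
  have "emeasure (distr M (\<mu> \<Otimes>\<^sub>M lborel) (\<lambda>w. (fst w, fst w + snd w))) C =
      (\<integral>\<^sup>+y. indicator C y \<partial>distr M (\<mu> \<Otimes>\<^sub>M lborel) (\<lambda>w. (fst w, fst w + snd w)))"
    by (simp add: nn_integral_indicator)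
  also have "\<dots> = (\<integral>\<^sup>+w. indicator C (fst w, fst w + snd w) \<partial>M)"
    by (subst nn_integral_distr) auto
  also have "\<dots> = (\<integral>\<^sup>+w. ennreal (noise_density \<sigma> (snd w - fst w)) * indicator C w \<partial>(\<mu> \<Otimes>\<^sub>M lborel))"
    using nn_integral_input_output[of "indicator C"] by simp
  also have "\<dots> = emeasure (density (\<mu> \<Otimes>\<^sub>M lborel) (\<lambda>w. ennreal (noise_density \<sigma> (snd w - fst w)))) C"
    by (subst emeasure_density) auto
  finally show "emeasure (distr M (\<mu> \<Otimes>\<^sub>M lborel) (\<lambda>w. (fst w, fst w + snd w))) C =
      emeasure (density (\<mu> \<Otimes>\<^sub>M lborel) (\<lambda>w. ennreal (noise_density \<sigma> (snd w - fst w)))) C" .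
qed simp

lemma channel_MI_eq_integral:
  "channel_MI \<mu> \<sigma> =
     (\<integral>w. ln (noise_density \<sigma> (snd w)) - ln (output_density \<mu> \<sigma> (fst w + snd w)) \<partial>M)"
proof -
  interpret I: information_space M "exp 1"
    unfolding information_space_def information_space_axioms_def
    using PM.prob_space_axioms by simp
  have sets_L: "sets (\<mu> \<Otimes>\<^sub>M lborel) = sets (borel \<Otimes>\<^sub>M borel)"
    by (rule sets_pair_measure_cong) (auto simp: sets_input)
  have MI_eq: "channel_MI \<mu> \<sigma> = prob_space.mutual_information M (exp 1) \<mu> lborel fst (\<lambda>(x, z). x + z)"
    unfolding channel_MI_def input_noise_space_def PM.mutual_information_def
    by (intro arg_cong2[where f="KL_divergence (exp 1)"] arg_cong2[where f=pair_measure] distr_cong)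
       (auto simp: sets_input sets_L)
  have "distributed M \<mu> fst (\<lambda>_. ennreal 1)"
    unfolding distributed_def using PM.M2.distr_pair_fst[of \<mu>] by (auto simp: density_1)
  moreover have "distributed M lborel (\<lambda>(x, z). x + z) (\<lambda>y. ennreal (output_density \<mu> \<sigma> y))"
    unfolding distributed_def using distr_output by auto
  moreover have "distributed M (\<mu> \<Otimes>\<^sub>M lborel) (\<lambda>w. (fst w, (\<lambda>(x, z). x + z) w))
      (\<lambda>w. ennreal (noise_density \<sigma> (snd w - fst w)))"
    unfolding distributed_def using distr_input_output by (auto simp: split_beta')
  ultimately have "prob_space.mutual_information M (exp 1) \<mu> lborel fst (\<lambda>(x, z). x + z) =
      (\<integral>w. noise_density \<sigma> (snd w - fst w) *
        log (exp 1) (noise_density \<sigma> (snd w - fst w) / (1 * output_density \<mu> \<sigma> (snd w))) \<partial>(\<mu> \<Otimes>\<^sub>M lborel))"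
    by (intro I.mutual_information_distr PM.M1.sigma_finite_measure_axioms lborel.sigma_finite_measure_axioms)
       (auto simp: output_density_pos less_imp_le)
  also have "\<dots> = (\<integral>w. ln (noise_density \<sigma> (snd w - fst w) / output_density \<mu> \<sigma> (snd w))
      \<partial>density (\<mu> \<Otimes>\<^sub>M lborel) (\<lambda>w. ennreal (noise_density \<sigma> (snd w - fst w))))"
    by (subst integral_density) (auto simp: log_def)
  also have "\<dots> = (\<integral>w. ln (noise_density \<sigma> (snd w) / output_density \<mu> \<sigma> (fst w + snd w)) \<partial>M)"
    unfolding distr_input_output[symmetric] by (subst integral_distr) auto
  also have "\<dots> = (\<integral>w. ln (noise_density \<sigma> (snd w)) - ln (output_density \<mu> \<sigma> (fst w + snd w)) \<partial>M)"
  proof (rule Bochner_Integration.integral_cong[OF refl])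
    fix w :: "real \<times> real"
    show "ln (noise_density \<sigma> (snd w) / output_density \<mu> \<sigma> (fst w + snd w)) =
        ln (noise_density \<sigma> (snd w)) - ln (output_density \<mu> \<sigma> (fst w + snd w))"
      using normal_density_pos[OF noise_pos, of 0 "snd w"] output_density_pos[of "fst w + snd w"]
      by (simp add: ln_div)
  qed
  finally show ?thesis using MI_eq by simp
qed


lemma distr_noise: "distr M G snd = G"
proof (rule measure_eqI)
  fix B assume B: "B \<in> sets (distr M G snd)"
  then have "emeasure (distr M G snd) B = emeasure M (space \<mu> \<times> B)"
    by (auto simp: emeasure_distr space_pair_measure dest: sets.sets_into_space
        intro!: arg_cong2[where f=emeasure])
  with B show "emeasure (distr M G snd) B = emeasure G B"
    by (simp add: PM.M2.emeasure_pair_measure_Times PM.M1.emeasure_space_1)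
qed simp

lemma AE_fst_bounded: "AE w in M. 0 \<le> fst w \<and> fst w \<le> A"
proof -
  have "AE x in distr M \<mu> fst. 0 \<le> x \<and> x \<le> A"
    using AE_input_bounded unfolding PM.M2.distr_pair_fst[of \<mu>] by simp
  then show ?thesis by (subst (asm) AE_distr_iff) auto
qed

lemma integrable_noise_fun:
  assumes [measurable]: "g \<in> borel_measurable borel"
    and "integrable lborel (\<lambda>z. noise_density \<sigma> z * g z)"
  shows "integrable M (\<lambda>w. g (snd w))"
proof -
  have "integrable G g" unfolding gauss_noise_def
    by (subst integrable_density) (use assms in auto)
  then have "integrable (distr M G snd) g" by (simp add: distr_noise)
  then show ?thesis by (subst (asm) integrable_distr_eq) auto
qed

lemma integral_noise_fun:
  assumes [measurable]: "g \<in> borel_measurable borel"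
  shows "(\<integral>w. g (snd w) \<partial>M) = (\<integral>z. noise_density \<sigma> z * g z \<partial>lborel)"
proof -
  have "(\<integral>w. g (snd w) \<partial>M) = (\<integral>z. g z \<partial>distr M G snd)"
    by (subst integral_distr) auto
  also have "\<dots> = (\<integral>z. noise_density \<sigma> z * g z \<partial>lborel)"
    unfolding distr_noise unfolding gauss_noise_def by (subst integral_density) auto
  finally show ?thesis .
qed

lemma integrable_noise_power: "integrable M (\<lambda>w. snd w ^ k)"
  by (rule integrable_noise_fun) (use integrable_normal_moment[where \<mu>=0 and \<sigma>=\<sigma> and k=k] noise_pos in simp_all)

lemma integrable_abs_noise: "integrable M (\<lambda>w. \<bar>snd w\<bar>)"
  by (rule integrable_noise_fun) (use integrable_normal_moment_abs[where \<mu>=0 and \<sigma>=\<sigma> and k=1] noise_pos in simp_all)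

lemma integral_noise_square: "(\<integral>w. (snd w)\<^sup>2 \<partial>M) = \<sigma>\<^sup>2"
  by (subst integral_noise_fun)
    (use integral_normal_moment_even[where \<mu>=0 and \<sigma>=\<sigma> and k=1] noise_pos in \<open>simp_all add: power2_eq_square\<close>)

lemma integral_noise_power4: "(\<integral>w. snd w ^ 4 \<partial>M) = 3 * \<sigma>^4"
  by (subst integral_noise_fun)
    (use integral_normal_moment_even[where \<mu>=0 and \<sigma>=\<sigma> and k=2] noise_pos in
      \<open>simp_all add: fact_numeral power2_eq_square field_simps power4_eq_xxxx\<close>)

lemma integral_noise: "(\<integral>z. z \<partial>G) = 0"
  unfolding gauss_noise_def
  by (subst integral_density) (use integral_normal_moment_odd[where \<mu>=0 and \<sigma>=\<sigma> and k=0] noise_pos in simp_all)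

lemma integral_ln_noise_density: "(\<integral>w. ln (noise_density \<sigma> (snd w)) \<partial>M) = - gauss_entropy \<sigma>"
proof -
  have "(\<integral>w. ln (noise_density \<sigma> (snd w)) \<partial>M) = (\<integral>w. - ln (2*pi*\<sigma>\<^sup>2)/2 - (snd w)\<^sup>2/(2*\<sigma>\<^sup>2) \<partial>M)"
    by (simp add: ln_normal_density[OF noise_pos])
  also have "\<dots> = - ln (2*pi*\<sigma>\<^sup>2)/2 - (\<integral>w. (snd w)\<^sup>2 \<partial>M)/(2*\<sigma>\<^sup>2)"
    using integrable_noise_power[of 2] by (simp add: PM.prob_space)
  also have "\<dots> = - gauss_entropy \<sigma>"
    using noise_pos by (simp add: integral_noise_square gauss_entropy_eq)
  finally show ?thesis .
qed

lemma integrable_ln_noise_density: "integrable M (\<lambda>w. ln (noise_density \<sigma> (snd w)))"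
  using integrable_noise_power[of 2] by (simp add: ln_normal_density[OF noise_pos])

lemma ln_output_density_bounds:
  assumes "0 \<le> x" "x \<le> A"
  shows "- ln (2*pi*\<sigma>\<^sup>2)/2 - (4*A\<^sup>2 + z\<^sup>2)/\<sigma>\<^sup>2 \<le> ln (output_density \<mu> \<sigma> (x + z))"
    and "ln (output_density \<mu> \<sigma> (x + z)) \<le> - ln (2*pi*\<sigma>\<^sup>2)/2"
proof -
  have "ln (output_density \<mu> \<sigma> (x + z)) \<le> ln (noise_density \<sigma> 0)"
    using output_density_le_peak output_density_pos normal_density_pos[OF noise_pos]
    by (subst ln_le_cancel_iff) auto
  then show "ln (output_density \<mu> \<sigma> (x + z)) \<le> - ln (2*pi*\<sigma>\<^sup>2)/2"
    by (simp add: ln_normal_density[OF noise_pos])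
  have "ln (noise_density \<sigma> (\<bar>x + z\<bar> + A)) \<le> ln (output_density \<mu> \<sigma> (x + z))"
    using output_density_ge output_density_pos normal_density_pos[OF noise_pos]
    by (subst ln_le_cancel_iff) auto
  moreover have "(\<bar>x + z\<bar> + A)\<^sup>2 \<le> 8*A\<^sup>2 + 2*z\<^sup>2"
  proof -
    have "\<bar>x + z\<bar> + A \<le> 2*A + \<bar>z\<bar>" using assms by auto
    then have "(\<bar>x + z\<bar> + A)\<^sup>2 \<le> (2*A + \<bar>z\<bar>)\<^sup>2" using assms by (intro power_mono) auto
    also have "\<dots> \<le> 8*A\<^sup>2 + 2*z\<^sup>2" using square_add_le[of "2*A" "\<bar>z\<bar>"] by simp
    finally show ?thesis .
  qed
  then have "(\<bar>x + z\<bar> + A)\<^sup>2/(2*\<sigma>\<^sup>2) \<le> (4*A\<^sup>2 + z\<^sup>2)/\<sigma>\<^sup>2"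
    using noise_pos by (simp add: field_simps)
  ultimately show "- ln (2*pi*\<sigma>\<^sup>2)/2 - (4*A\<^sup>2 + z\<^sup>2)/\<sigma>\<^sup>2 \<le> ln (output_density \<mu> \<sigma> (x + z))"
    by (simp add: ln_normal_density[OF noise_pos])
qed

lemma integrable_ln_output_density: "integrable M (\<lambda>w. ln (output_density \<mu> \<sigma> (fst w + snd w)))"
proof (rule Bochner_Integration.integrable_bound)
  show "integrable M (\<lambda>w. \<bar>ln (2*pi*\<sigma>\<^sup>2)\<bar>/2 + (4*A\<^sup>2 + (snd w)\<^sup>2)/\<sigma>\<^sup>2)"
    using integrable_noise_power[of 2] by auto
  show "AE w in M. norm (ln (output_density \<mu> \<sigma> (fst w + snd w))) \<le>
      norm (\<bar>ln (2*pi*\<sigma>\<^sup>2)\<bar>/2 + (4*A\<^sup>2 + (snd w)\<^sup>2)/\<sigma>\<^sup>2)"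
    using AE_fst_bounded
  proof eventually_elim
    case (elim w)
    have "0 \<le> (4*A\<^sup>2 + (snd w)\<^sup>2)/\<sigma>\<^sup>2" by auto
    with ln_output_density_bounds[of "fst w" "snd w"] elim show ?case by auto
  qed
qed measurable

lemma channel_MI_eq_output_entropy:
  "channel_MI \<mu> \<sigma> = - (\<integral>w. ln (output_density \<mu> \<sigma> (fst w + snd w)) \<partial>M) - gauss_entropy \<sigma>"
  unfolding channel_MI_eq_integral
  using integrable_ln_noise_density integrable_ln_output_density
  by (simp add: integral_ln_noise_density)

lemma channel_MI_eq_integral_input:
  "channel_MI \<mu> \<sigma> =
     (\<integral>x. (\<integral>z. ln (noise_density \<sigma> z) - ln (output_density \<mu> \<sigma> (x + z)) \<partial>G) \<partial>\<mu>)"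
  using PM.integral_fst'[OF Bochner_Integration.integrable_diff[OF
      integrable_ln_noise_density integrable_ln_output_density]]
  unfolding channel_MI_eq_integral by simp

lemma integral_ratio_output_density:
  assumes [measurable]: "q \<in> borel_measurable borel" and q_int: "integrable lborel q"
  shows "integrable M (\<lambda>w. q (fst w + snd w) / output_density \<mu> \<sigma> (fst w + snd w))"
    and "(\<integral>w. q (fst w + snd w) / output_density \<mu> \<sigma> (fst w + snd w) \<partial>M) = (\<integral>y. q y \<partial>lborel)"
proof -
  have q_eq: "(\<lambda>y. output_density \<mu> \<sigma> y *\<^sub>R (q y / output_density \<mu> \<sigma> y)) = q"
    using output_density_pos by (auto simp: fun_eq_iff) (metis less_irrefl)
  have "integrable (density lborel (output_density \<mu> \<sigma>)) (\<lambda>y. q y / output_density \<mu> \<sigma> y)"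
  proof (subst integrable_density)
    show "integrable lborel (\<lambda>y. output_density \<mu> \<sigma> y *\<^sub>R (q y / output_density \<mu> \<sigma> y))"
      unfolding q_eq by (rule q_int)
  qed (auto simp: less_imp_le output_density_pos)
  then show "integrable M (\<lambda>w. q (fst w + snd w) / output_density \<mu> \<sigma> (fst w + snd w))"
    unfolding distr_output[symmetric] by (subst (asm) integrable_distr_eq) (auto simp: split_beta')
  have "(\<integral>w. q (fst w + snd w) / output_density \<mu> \<sigma> (fst w + snd w) \<partial>M) =
      (\<integral>y. q y / output_density \<mu> \<sigma> y \<partial>distr M lborel (\<lambda>(x, z). x + z))"
    by (subst integral_distr) (auto simp: split_beta')
  also have "\<dots> = (\<integral>y. q y \<partial>lborel)"
    unfolding distr_output
    by (subst integral_density) (auto simp: less_imp_le output_density_pos simp del: real_scaleR_def,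
        simp only: q_eq)
  finally show "(\<integral>w. q (fst w + snd w) / output_density \<mu> \<sigma> (fst w + snd w) \<partial>M) = (\<integral>y. q y \<partial>lborel)" .
qed

lemma integral_ln_le_integral_ln_output_density:
  assumes [measurable]: "q \<in> borel_measurable borel" and q_pos: "\<And>y. q y > 0"
    and q_int: "integrable lborel q" and q_le: "(\<integral>y. q y \<partial>lborel) \<le> 1"
    and ln_q_int: "integrable M (\<lambda>w. ln (q (fst w + snd w)))"
  shows "(\<integral>w. ln (q (fst w + snd w)) \<partial>M) \<le> (\<integral>w. ln (output_density \<mu> \<sigma> (fst w + snd w)) \<partial>M)"
proof -
  let ?p = "\<lambda>w. output_density \<mu> \<sigma> (fst w + snd w)" and ?q = "\<lambda>w. q (fst w + snd w)"
  have "(\<integral>w. ln (?q w) \<partial>M) - (\<integral>w. ln (?p w) \<partial>M) = (\<integral>w. ln (?q w) - ln (?p w) \<partial>M)"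
    using ln_q_int integrable_ln_output_density by simp
  also have "\<dots> \<le> (\<integral>w. ?q w / ?p w - 1 \<partial>M)"
  proof (rule integral_mono)
    show "integrable M (\<lambda>w. ln (?q w) - ln (?p w))"
      using ln_q_int integrable_ln_output_density by simp
    show "integrable M (\<lambda>w. ?q w / ?p w - 1)"
      using integral_ratio_output_density(1)[OF assms(1) q_int] by simp
    fix w
    have "ln (?q w) - ln (?p w) = ln (?q w / ?p w)"
      using q_pos[of "fst w + snd w"] output_density_pos[of "fst w + snd w"] by (simp add: ln_div)
    also have "\<dots> \<le> ?q w / ?p w - 1"
      using q_pos output_density_pos by (intro ln_le_minus_one) simp
    finally show "ln (?q w) - ln (?p w) \<le> ?q w / ?p w - 1" .
  qed
  also have "\<dots> = (\<integral>y. q y \<partial>lborel) - 1"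
    using integral_ratio_output_density[OF assms(1) q_int] by (simp add: PM.prob_space)
  finally show ?thesis using q_le by simp
qed

lemma channel_MI_le_cross_entropy:
  assumes "q \<in> borel_measurable borel" and "\<And>y. q y > 0"
    and "integrable lborel q" and "(\<integral>y. q y \<partial>lborel) \<le> 1"
    and "integrable M (\<lambda>w. ln (q (fst w + snd w)))"
  shows "channel_MI \<mu> \<sigma> \<le> - (\<integral>w. ln (q (fst w + snd w)) \<partial>M) - gauss_entropy \<sigma>"
  using integral_ln_le_integral_ln_output_density[OF assms]
  unfolding channel_MI_eq_output_entropy by simp

lemma integral_input_fun_times_noise:
  assumes [measurable]: "f \<in> borel_measurable borel"
    and bounded: "\<And>x. 0 \<le> x \<Longrightarrow> x \<le> A \<Longrightarrow> \<bar>f x\<bar> \<le> B"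
  shows "integrable M (\<lambda>w. f (fst w) * snd w)" and "(\<integral>w. f (fst w) * snd w \<partial>M) = 0"
proof -
  show int: "integrable M (\<lambda>w. f (fst w) * snd w)"
  proof (rule Bochner_Integration.integrable_bound)
    show "integrable M (\<lambda>w. B * \<bar>snd w\<bar>)" using integrable_abs_noise by simp
    show "AE w in M. norm (f (fst w) * snd w) \<le> norm (B * \<bar>snd w\<bar>)"
      using AE_fst_bounded
    proof eventually_elim
      case (elim w)
      then have "\<bar>f (fst w)\<bar> \<le> B" using bounded by auto
      then show ?case by (auto simp: abs_mult intro: mult_right_mono)
    qed
  qed measurable
  have "(\<integral>w. f (fst w) * snd w \<partial>M) = (\<integral>x. \<integral>z. f x * z \<partial>G \<partial>\<mu>)"
    using PM.integral_fst'[OF int] by simp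
  also have "\<dots> = (\<integral>x. f x * (\<integral>z. z \<partial>G) \<partial>\<mu>)" by simp
  finally show "(\<integral>w. f (fst w) * snd w \<partial>M) = 0" by (simp add: integral_noise)
qed

lemma integral_output_centered_square_le:
  shows "integrable M (\<lambda>w. (fst w + snd w - A/2)\<^sup>2)"
    and "(\<integral>w. (fst w + snd w - A/2)\<^sup>2 \<partial>M) \<le> A\<^sup>2/4 + \<sigma>\<^sup>2"
proof -
  have expand: "(fst w + snd w - A/2)\<^sup>2 = (fst w - A/2)\<^sup>2 + 2 * ((fst w - A/2) * snd w) + (snd w)\<^sup>2"
    for w :: "real \<times> real"
    by (simp add: power2_eq_square algebra_simps)
  have centered_le: "AE w in M. (fst w - A/2)\<^sup>2 \<le> A\<^sup>2/4"
    using AE_fst_bounded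
  proof eventually_elim
    case (elim w)
    then have "\<bar>fst w - A/2\<bar> \<le> A/2" unfolding abs_le_iff by auto
    then have "\<bar>fst w - A/2\<bar>\<^sup>2 \<le> (A/2)\<^sup>2" by (intro power_mono) auto
    then show ?case by (simp add: power2_eq_square)
  qed
  have int1: "integrable M (\<lambda>w. (fst w - A/2)\<^sup>2)"
    by (rule PM.integrable_const_bound[where B="A\<^sup>2/4"]) (use centered_le in auto)
  have "(\<integral>w. (fst w - A/2)\<^sup>2 \<partial>M) \<le> (\<integral>w. A\<^sup>2/4 \<partial>M)"
    by (rule integral_mono_AE[OF int1 _ centered_le]) simp
  then have int1_le: "(\<integral>w. (fst w - A/2)\<^sup>2 \<partial>M) \<le> A\<^sup>2/4" by (simp add: PM.prob_space)
  have bounded: "\<bar>x - A/2\<bar> \<le> A" if "0 \<le> x" "x \<le> A" for x using that by auto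
  note int2 = integral_input_fun_times_noise[of "\<lambda>x. x - A/2", OF _ bounded]
  show "integrable M (\<lambda>w. (fst w + snd w - A/2)\<^sup>2)"
    unfolding expand using int1 int2 integrable_noise_power[of 2] by auto
  show "(\<integral>w. (fst w + snd w - A/2)\<^sup>2 \<partial>M) \<le> A\<^sup>2/4 + \<sigma>\<^sup>2"
    unfolding expand using int1 int1_le int2 integrable_noise_power[of 2] integral_noise_square by simp
qed

lemma channel_MI_le_gauss_bound: "channel_MI \<mu> \<sigma> \<le> ln (1 + A\<^sup>2/(4*\<sigma>\<^sup>2)) / 2"
proof -
  define v where "v = \<sigma>\<^sup>2 + A\<^sup>2/4"
  have v_pos: "v > 0" unfolding v_def using noise_pos by (simp add: add_pos_nonneg)
  define q where "q = normal_density (A/2) (sqrt v)"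
  have ln_q: "ln (q y) = - ln (2*pi * v)/2 - (y - A/2)\<^sup>2/(2 * v)" for y
    unfolding q_def using ln_normal_density[of "sqrt v" "A/2" y] v_pos by simp
  note sq_int = integral_output_centered_square_le(1)
  have "integrable M (\<lambda>w. ln (q (fst w + snd w)))" unfolding ln_q using sq_int by simp
  then have "channel_MI \<mu> \<sigma> \<le> - (\<integral>w. ln (q (fst w + snd w)) \<partial>M) - gauss_entropy \<sigma>"
    by (rule channel_MI_le_cross_entropy[rotated 4]) (auto simp: q_def normal_density_pos v_pos)
  also have "- (\<integral>w. ln (q (fst w + snd w)) \<partial>M) = ln (2*pi * v)/2 + (\<integral>w. (fst w + snd w - A/2)\<^sup>2 \<partial>M)/(2 * v)"
    unfolding ln_q using sq_int by (simp add: PM.prob_space)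
  also have "(\<integral>w. (fst w + snd w - A/2)\<^sup>2 \<partial>M)/(2 * v) \<le> 1/2"
    using integral_output_centered_square_le(2) v_pos by (simp add: v_def field_simps)
  also have "ln (2*pi * v)/2 + 1/2 - gauss_entropy \<sigma> = ln (v/\<sigma>\<^sup>2) / 2"
  proof -
    have "ln (v/\<sigma>\<^sup>2) = ln (2*pi * v) - ln (2*pi*\<sigma>\<^sup>2)"
      using noise_pos v_pos by (simp add: ln_div ln_mult)
    then show ?thesis using gauss_entropy_eq[OF noise_pos] by simp
  qed
  also have "v/\<sigma>\<^sup>2 = 1 + A\<^sup>2/(4*\<sigma>\<^sup>2)" using noise_pos by (simp add: v_def field_simps)
  finally show ?thesis by simp
qed

lemma channel_MI_le_mixture_bound:
  assumes "1 \<le> A" "0 < s" "0 < \<eta>" "\<eta> < 1"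
  shows "channel_MI \<mu> \<sigma> \<le> ln ((A + 2 * s)/(1 - \<eta>)) +
    ((- ln \<eta> + ln (2*pi*A\<^sup>2)/2 + 1/4) * \<sigma>\<^sup>2 + 3 * \<sigma>^4)/s\<^sup>2 - gauss_entropy \<sigma>"
proof -
  define K where "K = - ln \<eta> + ln (2*pi*A\<^sup>2)/2 + 1/4"
  define b where "b z = ln ((A + 2 * s)/(1 - \<eta>)) + (K * z\<^sup>2 + z^4)/s\<^sup>2" for z
  let ?q = "mixture_density A s \<eta>"
  have b_int: "integrable M (\<lambda>w. b (snd w))"
    unfolding b_def using integrable_noise_power[of 2] integrable_noise_power[of 4] by auto
  have neg_ln_q_le: "AE w in M. - ln (?q (fst w + snd w)) \<le> b (snd w)"
    using AE_fst_bounded by eventually_elim (use neg_ln_mixture_density_le[OF assms] in \<open>auto simp: b_def K_def\<close>)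
  have ln_q_int: "integrable M (\<lambda>w. ln (?q (fst w + snd w)))"
  proof (rule Bochner_Integration.integrable_bound[OF b_int])
    show "AE w in M. norm (ln (?q (fst w + snd w))) \<le> norm (b (snd w))"
      using neg_ln_q_le
    proof eventually_elim
      case (elim w)
      have "ln (?q (fst w + snd w)) \<le> 0"
        using mixture_density_pos[OF assms] mixture_density_le_one[OF assms] by simp
      with elim show ?case by auto
    qed
  qed (simp add: mixture_density_def)
  have "?q \<in> borel_measurable borel" unfolding mixture_density_def[abs_def] by simp
  then have "channel_MI \<mu> \<sigma> \<le> - (\<integral>w. ln (?q (fst w + snd w)) \<partial>M) - gauss_entropy \<sigma>"
    using has_bochner_integral_mixture_density[OF assms] mixture_density_pos[OF assms]
    by (intro channel_MI_le_cross_entropy ln_q_int) (auto simp: has_bochner_integral_iff)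
  also have "- (\<integral>w. ln (?q (fst w + snd w)) \<partial>M) \<le> (\<integral>w. b (snd w) \<partial>M)"
    using integral_mono_AE[OF _ b_int neg_ln_q_le] ln_q_int by simp
  also have "(\<integral>w. b (snd w) \<partial>M) = ln ((A + 2 * s)/(1 - \<eta>)) + (K * \<sigma>\<^sup>2 + 3 * \<sigma>^4)/s\<^sup>2"
    unfolding b_def using integrable_noise_power[of 2] integrable_noise_power[of 4]
    by (simp add: PM.prob_space integral_noise_square integral_noise_power4)
  finally show ?thesis unfolding K_def by simp
qed

end

lemma admissible_imp_peak_limited_input:
  assumes "admissible_input A \<alpha> \<mu>" "\<sigma> > 0"
  shows "peak_limited_input \<mu> \<sigma> A"
proof -
  have sets: "sets \<mu> = sets borel" and prob: "prob_space \<mu>" and nonneg: "AE x in \<mu>. 0 \<le> x"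
    and peak: "emeasure \<mu> {x. x > A} = 0"
    using assms(1) unfolding admissible_input_def by auto
  have "AE x in \<mu>. x \<le> A"
  proof (rule AE_I'[of "{x. x > A}"])
    show "{x. A < x} \<in> null_sets \<mu>" using peak sets by (intro null_setsI) auto
  qed auto
  with nonneg have "AE x in \<mu>. 0 \<le> x \<and> x \<le> A" by eventually_elim auto
  then show ?thesis using sets prob assms(2) by (intro peak_limited_input.intro)
qed

section \<open>Two inputs of mean A/2\<close>

definition binary_input :: "real \<Rightarrow> real measure" where
  "binary_input A = distr (measure_pmf (bernoulli_pmf (1/2))) borel (\<lambda>b. if b then A else 0)"

lemma integral_binary_input:
  fixes f :: "real \<Rightarrow> real"
  assumes [measurable]: "f \<in> borel_measurable borel"
  shows "(\<integral>x. f x \<partial>binary_input A) = (f A + f 0)/2"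
  unfolding binary_input_def by (subst integral_distr) auto

lemma admissible_binary_input:
  assumes "0 \<le> A" "1/2 \<le> \<alpha>"
  shows "admissible_input A \<alpha> (binary_input A)"
proof -
  have "prob_space (binary_input A)"
    unfolding binary_input_def by (rule prob_space.prob_space_distr) (auto intro: prob_space_measure_pmf)
  moreover have "AE x in binary_input A. 0 \<le> x"
    unfolding binary_input_def using assms by (subst AE_distr_iff) auto
  moreover have "emeasure (binary_input A) {x. x > A} = 0"
    unfolding binary_input_def using assms
    by (subst emeasure_distr) (auto simp: measure_pmf.emeasure_eq_measure)
  moreover have "(\<integral>x. x \<partial>binary_input A) \<le> \<alpha> * A"
    using integral_binary_input[of "\<lambda>x. x" A] mult_right_mono[OF assms(2,1)] by simp
  moreover have "sets (binary_input A) = sets borel" unfolding binary_input_def by simp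
  ultimately show ?thesis unfolding admissible_input_def by blast
qed

lemma output_density_binary_input:
  "output_density (binary_input A) \<sigma> y = (noise_density \<sigma> (y - A) + noise_density \<sigma> y)/2"
  unfolding output_density_def by (subst integral_binary_input) auto

lemma ln_noise_density_minus_ln_midpoint:
  assumes "\<sigma> > 0"
  shows "ln (noise_density \<sigma> z) - ln ((noise_density \<sigma> z + noise_density \<sigma> (z - c*\<sigma>\<^sup>2))/2) =
    - ln ((1 + exp (c*z - c\<^sup>2*\<sigma>\<^sup>2/2))/2)"
proof -
  have midpoint: "(noise_density \<sigma> z + noise_density \<sigma> (z - c*\<sigma>\<^sup>2))/2 =
      noise_density \<sigma> z * ((1 + exp (c*z - c\<^sup>2*\<sigma>\<^sup>2/2))/2)"
    unfolding noise_density_shift[OF assms] by (simp add: algebra_simps add_divide_distrib)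
  have "ln ((noise_density \<sigma> z + noise_density \<sigma> (z - c*\<sigma>\<^sup>2))/2) =
      ln (noise_density \<sigma> z) + ln ((1 + exp (c*z - c\<^sup>2*\<sigma>\<^sup>2/2))/2)"
    unfolding midpoint using normal_density_pos[OF assms]
    by (intro ln_mult_pos) (auto intro: add_pos_pos)
  then show ?thesis by simp
qed

lemma integrable_neg_ln_half_one_plus_likelihood_ratio:
  assumes "\<sigma> > 0"
  shows "integrable lborel (\<lambda>z. noise_density \<sigma> z * - ln ((1 + exp (c*z - c\<^sup>2*\<sigma>\<^sup>2/2))/2))"
proof (rule Bochner_Integration.integrable_bound)
  let ?L = "\<lambda>z. exp (c*z - c\<^sup>2*\<sigma>\<^sup>2/2)"
  show "integrable lborel (\<lambda>z. ln 2 * noise_density \<sigma> z + noise_density \<sigma> z * ?L z)"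
    using has_bochner_integral_likelihood_ratio_power[OF assms, where c=c and k=0]
      has_bochner_integral_likelihood_ratio_power[OF assms, where c=c and k=1]
    by (intro Bochner_Integration.integrable_add integrable_mult_right)
      (auto simp: has_bochner_integral_iff)
  show "AE z in lborel. norm (noise_density \<sigma> z * - ln ((1 + ?L z)/2)) \<le>
      norm (ln 2 * noise_density \<sigma> z + noise_density \<sigma> z * ?L z)"
  proof (rule AE_I2)
    fix z
    have "noise_density \<sigma> z * \<bar>ln ((1 + ?L z)/2)\<bar> \<le> noise_density \<sigma> z * (ln 2 + ?L z)"
      using abs_ln_half_one_plus_le[of "?L z"] by (intro mult_left_mono) auto
    moreover have "0 \<le> ln 2 + ?L z" by (intro add_nonneg_nonneg) auto
    ultimately show "norm (noise_density \<sigma> z * - ln ((1 + ?L z)/2)) \<le>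
        norm (ln 2 * noise_density \<sigma> z + noise_density \<sigma> z * ?L z)"
      by (simp add: abs_mult algebra_simps)
  qed
qed simp

lemma integral_neg_ln_half_one_plus_likelihood_ratio_ge:
  assumes "\<sigma> > 0"
  shows "exp (c\<^sup>2*\<sigma>\<^sup>2)/4 - exp (3*(c\<^sup>2*\<sigma>\<^sup>2))/24 - 5/24 \<le>
         (\<integral>z. noise_density \<sigma> z * - ln ((1 + exp (c*z - c\<^sup>2*\<sigma>\<^sup>2/2))/2) \<partial>lborel)"
proof -
  define L where "L z = exp (c*z - c\<^sup>2*\<sigma>\<^sup>2/2)" for z
  have moment: "has_bochner_integral lborel (\<lambda>z. noise_density \<sigma> z * L z ^ k)
      (exp (real k * (real k - 1) * c\<^sup>2*\<sigma>\<^sup>2/2))" for k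
    unfolding L_def by (rule has_bochner_integral_likelihood_ratio_power[OF assms])
  define P where "P z = noise_density \<sigma> z * (2/3 - 7/8 * L z + 1/4 * (L z)\<^sup>2 - 1/24 * L z ^ 3)" for z
  have "has_bochner_integral lborel P
      (2/3 * 1 - 7/8 * 1 + 1/4 * exp (c\<^sup>2*\<sigma>\<^sup>2) - 1/24 * exp (3*(c\<^sup>2*\<sigma>\<^sup>2)))"
  proof -
    have "P = (\<lambda>z. 2/3 * (noise_density \<sigma> z * L z ^ 0) - 7/8 * (noise_density \<sigma> z * L z ^ 1)
        + 1/4 * (noise_density \<sigma> z * L z ^ 2) - 1/24 * (noise_density \<sigma> z * L z ^ 3))"
      unfolding P_def by (auto simp: algebra_simps)
    then show ?thesis
      using moment[of 0] moment[of 1] moment[of 2] moment[of 3]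
      by (simp only:)
        (intro has_bochner_integral_add has_bochner_integral_diff has_bochner_integral_mult_right;
         simp add: algebra_simps)
  qed
  then have P_int: "integrable lborel P"
    and P_integral: "(\<integral>z. P z \<partial>lborel) = exp (c\<^sup>2*\<sigma>\<^sup>2)/4 - exp (3*(c\<^sup>2*\<sigma>\<^sup>2))/24 - 5/24"
    by (auto simp: has_bochner_integral_iff)
  have "(\<integral>z. P z \<partial>lborel) \<le> (\<integral>z. noise_density \<sigma> z * - ln ((1 + L z)/2) \<partial>lborel)"
  proof (rule integral_mono[OF P_int])
    show "integrable lborel (\<lambda>z. noise_density \<sigma> z * - ln ((1 + L z)/2))"
      unfolding L_def by (rule integrable_neg_ln_half_one_plus_likelihood_ratio[OF assms])
    fix z
    have "0 < L z" unfolding L_def by simp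
    then show "P z \<le> noise_density \<sigma> z * - ln ((1 + L z)/2)"
      unfolding P_def using neg_ln_half_one_plus_ge_cubic by (intro mult_left_mono) auto
  qed
  then show ?thesis unfolding P_integral L_def .
qed

lemma channel_MI_binary_input_ge:
  assumes "0 < A" "\<sigma> > 0"
  shows "exp (A\<^sup>2/\<sigma>\<^sup>2)/4 - exp (3*(A\<^sup>2/\<sigma>\<^sup>2))/24 - 5/24 \<le> channel_MI (binary_input A) \<sigma>"
proof -
  interpret peak_limited_input "binary_input A" \<sigma> A
    using admissible_imp_peak_limited_input[OF admissible_binary_input[of A 1]] assms by simp
  define F where "F x = (\<integral>z. ln (noise_density \<sigma> z) - ln (output_density (binary_input A) \<sigma> (x + z)) \<partial>G)"
    for x
  have F_ge: "exp (A\<^sup>2/\<sigma>\<^sup>2)/4 - exp (3*(A\<^sup>2/\<sigma>\<^sup>2))/24 - 5/24 \<le> F x" if "x = 0 \<or> x = A" for x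
  proof -
    \<comment> \<open>the other mass point of the input is x + c sigma^2\<close>
    define c where "c = (if x = 0 then A/\<sigma>\<^sup>2 else - A/\<sigma>\<^sup>2)"
    have c_sq: "c\<^sup>2*\<sigma>\<^sup>2 = A\<^sup>2/\<sigma>\<^sup>2" unfolding c_def using assms by (simp add: power2_eq_square)
    have "output_density (binary_input A) \<sigma> (x + z) =
        (noise_density \<sigma> z + noise_density \<sigma> (z - c*\<sigma>\<^sup>2))/2" for z
      using that assms unfolding output_density_binary_input c_def by (auto simp: add.commute)
    then have integrand_eq: "ln (noise_density \<sigma> z) - ln (output_density (binary_input A) \<sigma> (x + z)) =
        - ln ((1 + exp (c*z - c\<^sup>2*\<sigma>\<^sup>2/2))/2)" for z
      by (simp only: ln_noise_density_minus_ln_midpoint[OF assms(2)])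
    have "F x = (\<integral>z. noise_density \<sigma> z *\<^sub>R
        (ln (noise_density \<sigma> z) - ln (output_density (binary_input A) \<sigma> (x + z))) \<partial>lborel)"
      unfolding F_def gauss_noise_def by (subst integral_density) auto
    also have "\<dots> = (\<integral>z. noise_density \<sigma> z * - ln ((1 + exp (c*z - c\<^sup>2*\<sigma>\<^sup>2/2))/2) \<partial>lborel)"
      by (simp only: integrand_eq real_scaleR_def)
    finally show ?thesis
      using integral_neg_ln_half_one_plus_likelihood_ratio_ge[OF assms(2), of c] c_sq by simp
  qed
  have "channel_MI (binary_input A) \<sigma> = (F A + F 0)/2"
    unfolding channel_MI_eq_integral_input F_def[symmetric]
    by (rule integral_binary_input)
      (unfold F_def, rule PM.M2.borel_measurable_lebesgue_integral, simp)
  then show ?thesis using F_ge[of A] F_ge[of 0] by simp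
qed

definition uniform_input :: "real \<Rightarrow> real measure" where
  "uniform_input A = density lborel (\<lambda>x. ennreal (indicator {0..A} x / A))"

lemma integral_uniform_input:
  fixes f :: "real \<Rightarrow> real"
  assumes [measurable]: "f \<in> borel_measurable borel" and "0 < A"
  shows "(\<integral>x. f x \<partial>uniform_input A) = (\<integral>x. indicator {0..A} x / A * f x \<partial>lborel)"
  unfolding uniform_input_def using assms(2) by (subst integral_density) auto

lemma admissible_uniform_input:
  assumes "0 < A" "1/2 \<le> \<alpha>"
  shows "admissible_input A \<alpha> (uniform_input A)"
proof -
  have "emeasure (uniform_input A) (space (uniform_input A)) =
      (\<integral>\<^sup>+x. ennreal (indicator {0..A} x / A) \<partial>lborel)"
    unfolding uniform_input_def by (subst emeasure_density) auto
  also have "\<dots> = ennreal (\<integral>x. indicator {0..A} x / A \<partial>lborel)"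
    using assms by (intro nn_integral_eq_integral integrable_divide)
      (auto simp: integrable_indicator_iff emeasure_lborel_Icc_eq)
  also have "(\<integral>x. indicator {0..A} x / A \<partial>lborel) = 1" using assms by simp
  finally have "prob_space (uniform_input A)" by (intro prob_spaceI) simp
  moreover have "AE x in uniform_input A. 0 \<le> x"
    unfolding uniform_input_def by (subst AE_density) (auto simp: indicator_def split: if_splits)
  moreover have "emeasure (uniform_input A) {x. x > A} = 0"
    unfolding uniform_input_def
    by (subst emeasure_density) (auto simp: indicator_def nn_integral_0_iff_AE split: if_splits)
  moreover have "(\<integral>x. x \<partial>uniform_input A) = A/2"
  proof -
    have "(\<integral>x. x \<partial>uniform_input A) = (\<integral>x. x^1 * indicator {0..A} x \<partial>lborel) / A"
      using assms by (simp add: integral_uniform_input mult.commute)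
    also have "\<dots> = A/2" using assms by (subst integral_power) (auto simp: power2_eq_square)
    finally show ?thesis .
  qed
  moreover have "(1/2)*A \<le> \<alpha>*A" using assms by (intro mult_right_mono) auto
  moreover have "sets (uniform_input A) = sets borel" unfolding uniform_input_def by simp
  ultimately show ?thesis unfolding admissible_input_def by auto
qed

lemma output_density_uniform_input_le:
  assumes "0 < A" "\<sigma> > 0"
  shows "output_density (uniform_input A) \<sigma> y \<le> 1/A"
proof -
  have int: "integrable lborel (\<lambda>x. noise_density \<sigma> (y - x) / A)"
    unfolding noise_density_diff using assms by simp
  have "output_density (uniform_input A) \<sigma> y = (\<integral>x. indicator {0..A} x / A * noise_density \<sigma> (y - x) \<partial>lborel)"
    unfolding output_density_def using assms by (simp add: integral_uniform_input)
  also have "\<dots> \<le> (\<integral>x. noise_density \<sigma> (y - x) / A \<partial>lborel)"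
  proof (rule integral_mono[OF _ int])
    show "integrable lborel (\<lambda>x. indicator {0..A} x / A * noise_density \<sigma> (y - x))"
      by (rule Bochner_Integration.integrable_bound[OF int]) (auto simp: indicator_def assms less_imp_le)
    show "indicator {0..A} x / A * noise_density \<sigma> (y - x) \<le> noise_density \<sigma> (y - x) / A" for x
      using assms by (auto simp: indicator_def)
  qed
  also have "\<dots> = 1/A" unfolding noise_density_diff using assms by simp
  finally show ?thesis .
qed

lemma channel_MI_uniform_input_ge:
  assumes "0 < A" "\<sigma> > 0"
  shows "ln A - gauss_entropy \<sigma> \<le> channel_MI (uniform_input A) \<sigma>"
proof -
  interpret peak_limited_input "uniform_input A" \<sigma> A
    using admissible_imp_peak_limited_input[OF admissible_uniform_input[of A 1]] assms by simp
  have "(\<integral>w. ln (output_density (uniform_input A) \<sigma> (fst w + snd w)) \<partial>M) \<le> (\<integral>w. ln (1/A) \<partial>M)"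
  proof (rule integral_mono[OF integrable_ln_output_density])
    show "ln (output_density (uniform_input A) \<sigma> (fst w + snd w)) \<le> ln (1/A)" for w
      using output_density_pos output_density_uniform_input_le[OF assms] assms
      by (subst ln_le_cancel_iff) auto
  qed simp
  then show ?thesis
    unfolding channel_MI_eq_output_entropy using assms by (simp add: PM.prob_space ln_div)
qed

section \<open>Bounds on the capacity\<close>

lemma bdd_above_channel_MI:
  assumes "\<sigma> > 0"
  shows "bdd_above {channel_MI \<mu> \<sigma> | \<mu>. admissible_input A \<alpha> \<mu>}"
  using peak_limited_input.channel_MI_le_gauss_bound[OF admissible_imp_peak_limited_input[OF _ assms]]
  by (intro bdd_aboveI) blast

lemma channel_MI_le_capacity:
  assumes "\<sigma> > 0" "admissible_input A \<alpha> \<mu>"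
  shows "channel_MI \<mu> \<sigma> \<le> capacity \<sigma> \<alpha> A"
  unfolding capacity_def using bdd_above_channel_MI[OF assms(1)] assms(2)
  by (intro cSup_upper) auto

lemma capacity_le:
  assumes "\<sigma> > 0" "0 \<le> A" "1/2 \<le> \<alpha>"
    and "\<And>\<mu>. peak_limited_input \<mu> \<sigma> A \<Longrightarrow> channel_MI \<mu> \<sigma> \<le> B"
  shows "capacity \<sigma> \<alpha> A \<le> B"
  unfolding capacity_def
proof (rule cSup_least)
  show "{channel_MI \<mu> \<sigma> | \<mu>. admissible_input A \<alpha> \<mu>} \<noteq> {}"
    using admissible_binary_input[OF assms(2,3)] by auto
next
  fix x assume "x \<in> {channel_MI \<mu> \<sigma> | \<mu>. admissible_input A \<alpha> \<mu>}"
  then obtain \<mu> where "admissible_input A \<alpha> \<mu>" and "x = channel_MI \<mu> \<sigma>" by auto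
  then show "x \<le> B" using assms(4) admissible_imp_peak_limited_input[OF _ assms(1)] by auto
qed

lemma capacity_le_small:
  assumes "\<sigma> > 0" "0 \<le> A" "1/2 \<le> \<alpha>"
  shows "capacity \<sigma> \<alpha> A \<le> ln (1 + A\<^sup>2/(4*\<sigma>\<^sup>2)) / 2"
  using assms by (intro capacity_le peak_limited_input.channel_MI_le_gauss_bound)

lemma capacity_ge_small:
  assumes "\<sigma> > 0" "0 < A" "1/2 \<le> \<alpha>"
  shows "exp (A\<^sup>2/\<sigma>\<^sup>2)/4 - exp (3*(A\<^sup>2/\<sigma>\<^sup>2))/24 - 5/24 \<le> capacity \<sigma> \<alpha> A"
  using order_trans[OF channel_MI_binary_input_ge[OF assms(2,1)]
      channel_MI_le_capacity[OF assms(1) admissible_binary_input[OF less_imp_le[OF assms(2)] assms(3)]]] .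

lemma capacity_ge_large:
  assumes "\<sigma> > 0" "0 < A" "1/2 \<le> \<alpha>"
  shows "- (1/2) * ln (2 * pi * exp 1) \<le> capacity \<sigma> \<alpha> A - ln (A / \<sigma>)"
proof -
  have "ln A - gauss_entropy \<sigma> \<le> capacity \<sigma> \<alpha> A"
    using order_trans[OF channel_MI_uniform_input_ge[OF assms(2,1)]
        channel_MI_le_capacity[OF assms(1) admissible_uniform_input[OF assms(2,3)]]] .
  moreover have "ln (A / \<sigma>) = ln A - ln \<sigma>" using assms(1,2) by (simp add: ln_div)
  ultimately show ?thesis using gauss_entropy_eq_ln_sigma[OF assms(1)] by linarith
qed

lemma capacity_le_large:
  assumes "\<sigma> > 0" "1 < A" "1/2 \<le> \<alpha>"
  shows "capacity \<sigma> \<alpha> A - ln (A / \<sigma>) \<le> - (1/2) * ln (2 * pi * exp 1) +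
    (ln ((A + 2 * sqrt A)/(1 - 1/A)) - ln A) + ((2 * ln A + ln (2*pi)/2 + 1/4) * \<sigma>\<^sup>2 + 3 * \<sigma>^4)/A"
proof -
  have A_pos: "0 < A" using assms by simp
  have "capacity \<sigma> \<alpha> A \<le> ln ((A + 2 * sqrt A)/(1 - 1/A)) +
      ((- ln (1/A) + ln (2*pi*A\<^sup>2)/2 + 1/4) * \<sigma>\<^sup>2 + 3 * \<sigma>^4)/(sqrt A)\<^sup>2 - gauss_entropy \<sigma>"
    using assms by (intro capacity_le peak_limited_input.channel_MI_le_mixture_bound) auto
  moreover have "- ln (1/A) + ln (2*pi*A\<^sup>2)/2 + 1/4 = 2 * ln A + ln (2*pi)/2 + 1/4"
    using A_pos by (simp add: ln_div ln_mult ln_realpow)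
  moreover have "(sqrt A)\<^sup>2 = A" using A_pos by simp
  moreover have "ln (A / \<sigma>) = ln A - ln \<sigma>" using A_pos assms(1) by (simp add: ln_div)
  ultimately show ?thesis using gauss_entropy_eq_ln_sigma[OF assms(1)] by simp
qed

theorem theorem4:
  fixes \<sigma> \<alpha> :: real
  assumes "\<sigma> > 0" and "1/2 \<le> \<alpha>" and "\<alpha> \<le> 1"
  shows "((\<lambda>A. capacity \<sigma> \<alpha> A - ln (A / \<sigma>)) \<longlongrightarrow> - (1/2) * ln (2 * pi * exp 1)) at_top \<and>
         ((\<lambda>A. capacity \<sigma> \<alpha> A / (A\<^sup>2 / \<sigma>\<^sup>2)) \<longlongrightarrow> 1/8) (at_right 0)"
proof
  show "((\<lambda>A. capacity \<sigma> \<alpha> A - ln (A / \<sigma>)) \<longlongrightarrow> - (1/2) * ln (2 * pi * exp 1)) at_top"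
  proof (rule tendsto_sandwich[OF _ _ tendsto_const])
    show "\<forall>\<^sub>F A in at_top. - (1/2) * ln (2 * pi * exp 1) \<le> capacity \<sigma> \<alpha> A - ln (A / \<sigma>)"
      using eventually_gt_at_top[of 0] by eventually_elim (use capacity_ge_large assms in auto)
    show "\<forall>\<^sub>F A in at_top. capacity \<sigma> \<alpha> A - ln (A / \<sigma>) \<le> - (1/2) * ln (2 * pi * exp 1) +
        (ln ((A + 2 * sqrt A)/(1 - 1/A)) - ln A) + ((2 * ln A + ln (2*pi)/2 + 1/4) * \<sigma>\<^sup>2 + 3 * \<sigma>^4)/A"
      using eventually_gt_at_top[of 1] by eventually_elim (use capacity_le_large assms in auto)
  qed real_asymp
  show "((\<lambda>A. capacity \<sigma> \<alpha> A / (A\<^sup>2 / \<sigma>\<^sup>2)) \<longlongrightarrow> 1/8) (at_right 0)"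
  proof (rule tendsto_sandwich)
    show "\<forall>\<^sub>F A in at_right 0. (exp (A\<^sup>2/\<sigma>\<^sup>2)/4 - exp (3*(A\<^sup>2/\<sigma>\<^sup>2))/24 - 5/24) / (A\<^sup>2/\<sigma>\<^sup>2) \<le>
        capacity \<sigma> \<alpha> A / (A\<^sup>2 / \<sigma>\<^sup>2)"
      using eventually_at_right_less[of 0]
      by eventually_elim (intro divide_right_mono capacity_ge_small, use assms in auto)
    show "\<forall>\<^sub>F A in at_right 0. capacity \<sigma> \<alpha> A / (A\<^sup>2 / \<sigma>\<^sup>2) \<le> (ln (1 + A\<^sup>2/(4*\<sigma>\<^sup>2)) / 2) / (A\<^sup>2/\<sigma>\<^sup>2)"
      using eventually_at_right_less[of 0]
      by eventually_elim (intro divide_right_mono capacity_le_small, use assms in auto)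
    show "((\<lambda>A. (exp (A\<^sup>2/\<sigma>\<^sup>2)/4 - exp (3*(A\<^sup>2/\<sigma>\<^sup>2))/24 - 5/24) / (A\<^sup>2/\<sigma>\<^sup>2)) \<longlongrightarrow> 1/8) (at_right 0)"
      using assms(1) by real_asymp
    show "((\<lambda>A. (ln (1 + A\<^sup>2/(4*\<sigma>\<^sup>2)) / 2) / (A\<^sup>2/\<sigma>\<^sup>2)) \<longlongrightarrow> 1/8) (at_right 0)"
      using assms(1) by real_asymp
  qed
qed

end
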